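(* Consider the following cutting-plane algorithm for $\min_{\mathbf{x}\in\mathcal{X}}\Phi_R(\mathbf{x})$ with tolerance $\epsilon\ge0$. Initialize $L=1$, $\theta^{lb}=-\infty$, $\theta^{ub}=+\infty$, and pick $\hat{\mathbf{x}}^1\in\mathcal{X}$; the cut set is initially empty. While $\theta^{ub}-\theta^{lb}>\epsilon$: set $\hat{\mathbf x}=\hat{\mathbf x}^L$; for each $\omega\in\Omega$ compute an optimal solution $\hat{\mathbf S}^\omega$ of the problem defining $Q_\omega(\hat{\mathbf x})$; compute $(\hat p_\omega)\in\arg\min_{P\in\mathfrak P}\sum_\omega p_\omega f^\omega(\hat{\mathbf S}^\omega)$ and $\Phi_R(\hat{\mathbf x})=\sum_\omega\hat p_\omega f^\omega(\hat{\mathbf S}^\omega)$; if $\Phi_R(\hat{\mathbf x})<\theta^{ub}$ set $\theta^{ub}=\Phi_R(\hat{\mathbf x})$ and $\mathbf x^*=\hat{\mathbf x}$; add the cut $\eta\ge\Phi_R(\hat{\mathbf x})-\sum_{q=1}^k\sum_{i\in N}c_{q,i}(\hat{\mathbf x})x_{q,i}$ with $c_{q,i}(\hat{\mathbf x})=\max_{P\in\mathfrak P}\sum_\omega p_\omega\rho^\omega_{q,i}(\boldsymbol\emptyset)\hat y^\omega_{q,i}\xi^\omega_i$; solve the master problem $\min\{\eta:\mathbf x\in\mathcal X,\ \eta\in\mathbb R,\ (\eta,\mathbf x)\text{ satisfies all cuts added so far}\}$ exactly, obtaining $(\eta^{L+1},\hat{\mathbf x}^{L+1})$; set $\theta^{lb}=\eta^{L+1}$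 and $L\leftarrow L+1$. Assuming every subproblem (each $Q_\omega$, each optimization over $\mathfrak P$, and each master problem) is solved exactly, the algorithm terminates after finitely many iterations, and upon termination $\theta^{ub}=\Phi_R(\mathbf x^* )\le\min_{\mathbf x\in\mathcal X}\Phi_R(\mathbf x)+\epsilon$; in particular, with $\epsilon=0$ it returns a globally optimal solution $\mathbf x^*$ of $\min_{\mathbf x\in\mathcal X}\Phi_R(\mathbf x)$.
   Context: Let $n,k$ be positive integers, $N=\{1,\dots,n\}$, and $\mathbb{X}(N,k)$ the set of $k$-tuples $\mathbf{S}=(S_1,\dots,S_k)$ of pairwise disjoint subsets of $N$, identified with $\mathbf{s}\in\{0,1\}^{kn}$ via $s_{q,i}=1$ iff $i\in S_q$. A function $f:\mathbb{X}(N,k)\to\mathbb{R}$ is $k$-submodular if $f(\mathbf{X})+f(\mathbf{Y})\ge f(\mathbf{X}\sqcap\mathbf{Y})+f(\mathbf{X}\sqcup\mathbf{Y})$, where $\mathbf{X}\sqcap\mathbf{Y}=(X_q\cap Y_q)_q$ and the $i$-th component of $\mathbf{X}\sqcup\mathbf{Y}$ is $(X_i\cup Y_i)\setminus\bigcup_{q\ne i}(X_q\cup Y_q)$; monotone if $f(\mathbf X)\le f(\mathbf Y)$ whenever $X_q\subseteq Y_q$ for all $q$. $\Omega$ is a finite scenario set; for each $\omega$ we have $\xi^\omega\in\{0,1\}^n$ and a monotone $k$-submodular $f^\omega$ with marginal gains $\rho^\omega_{q,i}(\mathbf{X})=f^\omega(X_1,\dots,X_q\cup\{i\},\dots,X_k)-f^\omega(\mathbf{X})$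 for $i\notin\bigcup_rX_r$; $\boldsymbol\emptyset=(\emptyset,\dots,\emptyset)$. With nonnegative integer budgets $A_q,D_q$: $\mathcal{X}=\{\mathbf{x}\in\{0,1\}^{kn}:\sum_i x_{q,i}\le A_q\ \forall q,\ \sum_q x_{q,i}\le1\ \forall i\}$; $Q_\omega(\mathbf x)=\max\{f^\omega(\mathbf S):\mathbf S\in\mathbb X(N,k),\ s_{q,i}\le1-x_{q,i}\xi^\omega_i\ \forall q,i,\ \sum_i s_{q,i}\le D_q\ \forall q\}$. $\mathfrak P$ is a nonempty compact set of probability distributions $(p_\omega)_{\omega\in\Omega}$, and $\Phi_R(\mathbf x)=\min_{P\in\mathfrak P}\sum_\omega p_\omega Q_\omega(\mathbf x)$. $\hat y^\omega_{q,i}=1$ if $i\in\hat S^\omega_q$ and $0$ otherwise. *)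

theory Defs
  imports "HOL-Analysis.Analysis"
begin

text \<open>The 0/1 vector s is s_{q,i} = 1 iff i \<in> S q.\<close>

definition kset :: "nat \<Rightarrow> nat \<Rightarrow> (nat \<Rightarrow> nat set) set" where
  "kset n k = {S. (\<forall>q. S q \<subseteq> (if q \<in> {1..k} then {1..n} else {})) \<and>
                  (\<forall>q r. q \<noteq> r \<longrightarrow> S q \<inter> S r = {})}"

definition kinf :: "(nat \<Rightarrow> nat set) \<Rightarrow> (nat \<Rightarrow> nat set) \<Rightarrow> (nat \<Rightarrow> nat set)" where
  "kinf X Y = (\<lambda>q. X q \<inter> Y q)"

definition ksup :: "nat \<Rightarrow> (nat \<Rightarrow> nat set) \<Rightarrow> (nat \<Rightarrow> nat set) \<Rightarrow> (nat \<Rightarrow> nat set)" where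
  "ksup k X Y = (\<lambda>q. if q \<in> {1..k}
       then (X q \<union> Y q) - (\<Union>r\<in>{1..k} - {q}. X r \<union> Y r) else {})"

definition k_submodular :: "nat \<Rightarrow> nat \<Rightarrow> ((nat \<Rightarrow> nat set) \<Rightarrow> real) \<Rightarrow> bool" where
  "k_submodular n k f \<longleftrightarrow> (\<forall>X\<in>kset n k. \<forall>Y\<in>kset n k.
       f X + f Y \<ge> f (kinf X Y) + f (ksup k X Y))"

definition k_monotone :: "nat \<Rightarrow> nat \<Rightarrow> ((nat \<Rightarrow> nat set) \<Rightarrow> real) \<Rightarrow> bool" where
  "k_monotone n k f \<longleftrightarrow> (\<forall>X\<in>kset n k. \<forall>Y\<in>kset n k.
       (\<forall>q. X q \<subseteq> Y q) \<longrightarrow> f X \<le> f Y)"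

definition empty_tuple :: "nat \<Rightarrow> nat set" where
  "empty_tuple = (\<lambda>q. {})"

definition rho :: "((nat \<Rightarrow> nat set) \<Rightarrow> real) \<Rightarrow> nat \<Rightarrow> nat \<Rightarrow> (nat \<Rightarrow> nat set) \<Rightarrow> real" where
  "rho f q i X = f (X(q := X q \<union> {i})) - f X"

text \<open>The first-stage feasible set \<X> (x identified with a k-tuple X of disjoint sets)\<close>
definition Xset :: "nat \<Rightarrow> nat \<Rightarrow> (nat \<Rightarrow> nat) \<Rightarrow> (nat \<Rightarrow> nat set) set" where
  "Xset n k A = {X \<in> kset n k. \<forall>q\<in>{1..k}. card (X q) \<le> A q}"

text \<open>Feasible set of the subproblem defining Q_omega(x); xi :: nat => bool is xi^omega\<close>
definition Qfeas :: "nat \<Rightarrow> nat \<Rightarrow> (nat \<Rightarrow> nat) \<Rightarrow> (nat \<Rightarrow> bool) \<Rightarrow> (nat \<Rightarrow> nat set)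
     \<Rightarrow> (nat \<Rightarrow> nat set) set" where
  "Qfeas n k D xi X = {S \<in> kset n k.
      (\<forall>q\<in>{1..k}. \<forall>i\<in>{1..n}. i \<in> S q \<longrightarrow> \<not> (i \<in> X q \<and> xi i)) \<and>
      (\<forall>q\<in>{1..k}. card (S q) \<le> D q)}"

definition Qval :: "nat \<Rightarrow> nat \<Rightarrow> (nat \<Rightarrow> nat) \<Rightarrow> (nat \<Rightarrow> bool) \<Rightarrow> ((nat \<Rightarrow> nat set) \<Rightarrow> real)
     \<Rightarrow> (nat \<Rightarrow> nat set) \<Rightarrow> real" where
  "Qval n k D xi f X = Max (f ` Qfeas n k D xi X)"

definition prob_dists :: "('w::finite \<Rightarrow> real) set" where
  "prob_dists = {p. (\<forall>w. 0 \<le> p w) \<and> sum p UNIV = 1}"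

definition PhiR :: "nat \<Rightarrow> nat \<Rightarrow> (nat \<Rightarrow> nat) \<Rightarrow> ('w::finite \<Rightarrow> nat \<Rightarrow> bool)
     \<Rightarrow> ('w \<Rightarrow> (nat \<Rightarrow> nat set) \<Rightarrow> real) \<Rightarrow> ('w \<Rightarrow> real) set \<Rightarrow> (nat \<Rightarrow> nat set) \<Rightarrow> real" where
  "PhiR n k D xi f PP X = (INF p\<in>PP. \<Sum>w\<in>UNIV. p w * Qval n k D (xi w) (f w) X)"

text \<open>A run is described by: xh L = x-hat^L (L \<ge> 1), Sh L w = S-hat^w computed in
  iteration L, ph L = p-hat computed in iteration L, eta L = eta^{L+1} computed
  by the master problem in iteration L.\<close>

definition Phival :: "('w::finite \<Rightarrow> (nat \<Rightarrow> nat set) \<Rightarrow> real) \<Rightarrow> (nat \<Rightarrow> 'w \<Rightarrow> real)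
     \<Rightarrow> (nat \<Rightarrow> 'w \<Rightarrow> nat \<Rightarrow> nat set) \<Rightarrow> nat \<Rightarrow> real" where
  "Phival f ph Sh L = (\<Sum>w\<in>UNIV. ph L w * f w (Sh L w))"

text \<open>theta^ub, x^* and theta^lb after m completed iterations\<close>
fun theta_ub :: "('w::finite \<Rightarrow> (nat \<Rightarrow> nat set) \<Rightarrow> real) \<Rightarrow> (nat \<Rightarrow> 'w \<Rightarrow> real)
     \<Rightarrow> (nat \<Rightarrow> 'w \<Rightarrow> nat \<Rightarrow> nat set) \<Rightarrow> nat \<Rightarrow> ereal" where
  "theta_ub f ph Sh 0 = \<infinity>"
| "theta_ub f ph Sh (Suc m) =
     (if ereal (Phival f ph Sh (Suc m)) < theta_ub f ph Sh m
      then ereal (Phival f ph Sh (Suc m)) else theta_ub f ph Sh m)"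

fun xstar :: "('w::finite \<Rightarrow> (nat \<Rightarrow> nat set) \<Rightarrow> real) \<Rightarrow> (nat \<Rightarrow> 'w \<Rightarrow> real)
     \<Rightarrow> (nat \<Rightarrow> 'w \<Rightarrow> nat \<Rightarrow> nat set) \<Rightarrow> (nat \<Rightarrow> nat \<Rightarrow> nat set) \<Rightarrow> nat \<Rightarrow> (nat \<Rightarrow> nat set)" where
  "xstar f ph Sh xh 0 = undefined"
| "xstar f ph Sh xh (Suc m) =
     (if ereal (Phival f ph Sh (Suc m)) < theta_ub f ph Sh m
      then xh (Suc m) else xstar f ph Sh xh m)"

fun theta_lb :: "(nat \<Rightarrow> real) \<Rightarrow> nat \<Rightarrow> ereal" where
  "theta_lb eta 0 = -\<infinity>"
| "theta_lb eta (Suc m) = ereal (eta (Suc m))"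

definition cutcoef :: "('w::finite \<Rightarrow> nat \<Rightarrow> bool) \<Rightarrow> ('w \<Rightarrow> (nat \<Rightarrow> nat set) \<Rightarrow> real)
     \<Rightarrow> ('w \<Rightarrow> real) set \<Rightarrow> (nat \<Rightarrow> 'w \<Rightarrow> nat \<Rightarrow> nat set) \<Rightarrow> nat \<Rightarrow> nat \<Rightarrow> nat \<Rightarrow> real" where
  "cutcoef xi f PP Sh j q i = (SUP p\<in>PP. \<Sum>w\<in>UNIV.
      p w * rho (f w) q i empty_tuple * (if i \<in> Sh j w q then 1 else 0) * (if xi w i then 1 else 0))"

definition cutval :: "nat \<Rightarrow> nat \<Rightarrow> ('w::finite \<Rightarrow> nat \<Rightarrow> bool) \<Rightarrow> ('w \<Rightarrow> (nat \<Rightarrow> nat set) \<Rightarrow> real)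
     \<Rightarrow> ('w \<Rightarrow> real) set \<Rightarrow> (nat \<Rightarrow> 'w \<Rightarrow> real) \<Rightarrow> (nat \<Rightarrow> 'w \<Rightarrow> nat \<Rightarrow> nat set)
     \<Rightarrow> nat \<Rightarrow> (nat \<Rightarrow> nat set) \<Rightarrow> real" where
  "cutval n k xi f PP ph Sh j X = Phival f ph Sh j -
     (\<Sum>q\<in>{1..k}. \<Sum>i\<in>{1..n}. cutcoef xi f PP Sh j q i * (if i \<in> X q then 1 else 0))"

definition iteration_ok :: "nat \<Rightarrow> nat \<Rightarrow> (nat \<Rightarrow> nat) \<Rightarrow> (nat \<Rightarrow> nat) \<Rightarrow> ('w::finite \<Rightarrow> nat \<Rightarrow> bool)
     \<Rightarrow> ('w \<Rightarrow> (nat \<Rightarrow> nat set) \<Rightarrow> real) \<Rightarrow> ('w \<Rightarrow> real) set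
     \<Rightarrow> (nat \<Rightarrow> nat \<Rightarrow> nat set) \<Rightarrow> (nat \<Rightarrow> 'w \<Rightarrow> nat \<Rightarrow> nat set) \<Rightarrow> (nat \<Rightarrow> 'w \<Rightarrow> real)
     \<Rightarrow> (nat \<Rightarrow> real) \<Rightarrow> nat \<Rightarrow> bool" where
  "iteration_ok n k A D xi f PP xh Sh ph eta L \<longleftrightarrow>
     (\<forall>w. Sh L w \<in> Qfeas n k D (xi w) (xh L) \<and>
          (\<forall>S\<in>Qfeas n k D (xi w) (xh L). f w S \<le> f w (Sh L w))) \<and>
     ph L \<in> PP \<and>
     (\<forall>p\<in>PP. (\<Sum>w\<in>UNIV. ph L w * f w (Sh L w)) \<le> (\<Sum>w\<in>UNIV. p w * f w (Sh L w))) \<and>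
     xh (Suc L) \<in> Xset n k A \<and>
     (\<forall>j\<in>{1..L}. cutval n k xi f PP ph Sh j (xh (Suc L)) \<le> eta L) \<and>
     (\<forall>X\<in>Xset n k A. \<forall>e::real. (\<forall>j\<in>{1..L}. cutval n k xi f PP ph Sh j X \<le> e) \<longrightarrow> eta L \<le> e)"

definition valid_run :: "nat \<Rightarrow> nat \<Rightarrow> (nat \<Rightarrow> nat) \<Rightarrow> (nat \<Rightarrow> nat) \<Rightarrow> ('w::finite \<Rightarrow> nat \<Rightarrow> bool)
     \<Rightarrow> ('w \<Rightarrow> (nat \<Rightarrow> nat set) \<Rightarrow> real) \<Rightarrow> ('w \<Rightarrow> real) set \<Rightarrow> real
     \<Rightarrow> (nat \<Rightarrow> nat \<Rightarrow> nat set) \<Rightarrow> (nat \<Rightarrow> 'w \<Rightarrow> nat \<Rightarrow> nat set) \<Rightarrow> (nat \<Rightarrow> 'w \<Rightarrow> real)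
     \<Rightarrow> (nat \<Rightarrow> real) \<Rightarrow> bool" where
  "valid_run n k A D xi f PP eps xh Sh ph eta \<longleftrightarrow>
     xh 1 \<in> Xset n k A \<and>
     (\<forall>m. (\<forall>m'\<le>m. theta_ub f ph Sh m' - theta_lb eta m' > ereal eps) \<longrightarrow>
          iteration_ok n k A D xi f PP xh Sh ph eta (Suc m))"

end

theory Submission
  imports Defs
begin

(* Each iteration adds a cut that is valid and tight. Valid: k-submodularity makes the marginal
   gain rho_{q,i}(Y) largest at Y = empty, so deleting the interdicted elements from S^w loses at
   most the sum of their rho_{q,i}(empty), and what remains is feasible for Q_w(x); hence the
   master value eta^{L+1} never exceeds min Phi_R. Tight: at its own iterate every interdicted
   coefficient vanishes, so the cut is Phi_R(x^L) there. Consequently, as soon as the master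
   problem returns an earlier iterate, eta^{L+1} >= theta_ub and the loop stops; since the
   feasible set is finite this must happen. *)

lemma kset_range: "S \<in> kset n k \<Longrightarrow> S q \<subseteq> (if q \<in> {1..k} then {1..n} else {})"
  unfolding kset_def by blast

lemma kset_subset_range: "S \<in> kset n k \<Longrightarrow> q \<in> {1..k} \<Longrightarrow> S q \<subseteq> {1..n}"
  using kset_range[of S n k q] by simp

lemma kset_outside_empty: "S \<in> kset n k \<Longrightarrow> q \<notin> {1..k} \<Longrightarrow> S q = {}"
  using kset_range[of S n k q] by (metis subset_empty)

lemma kset_disjoint: "S \<in> kset n k \<Longrightarrow> q \<noteq> r \<Longrightarrow> S q \<inter> S r = {}"
  unfolding kset_def by blast

lemma kset_subtuple:
  assumes T: "T \<in> kset n k" and ST: "\<And>q. S q \<subseteq> T q"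
  shows "S \<in> kset n k"
proof -
  have "S q \<subseteq> (if q \<in> {1..k} then {1..n} else {})" for q
    using kset_range[OF T, of q] ST[of q] by (rule order_trans[rotated])
  moreover have "S q \<inter> S r = {}" if "q \<noteq> r" for q r
    using kset_disjoint[OF T that] ST[of q] ST[of r] by blast
  ultimately show ?thesis
    unfolding kset_def by blast
qed

lemma finite_kset: "finite (kset n k)"
proof -
  have "inj_on (\<lambda>S. restrict S {1..k}) (kset n k)"
  proof (rule inj_onI, rule ext)
    fix S T q
    assume "S \<in> kset n k" "T \<in> kset n k" "restrict S {1..k} = restrict T {1..k}"
    then show "S q = T q"
      by (cases "q \<in> {1..k}") (metis restrict_apply', simp add: kset_outside_empty)
  qed
  moreover have "(\<lambda>S. restrict S {1..k}) ` kset n k \<subseteq> PiE {1..k} (\<lambda>_. Pow {1..n})"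
    using kset_subset_range by fastforce
  then have "finite ((\<lambda>S. restrict S {1..k}) ` kset n k)"
    by (rule finite_subset) (simp add: finite_PiE)
  ultimately show ?thesis
    using finite_imageD by blast
qed

lemma finite_Xset: "finite (Xset n k A)"
  using finite_kset unfolding Xset_def by (rule finite_subset[rotated]) blast

lemma finite_Qfeas: "finite (Qfeas n k D xi X)"
  using finite_kset unfolding Qfeas_def by (rule finite_subset[rotated]) blast

lemma k_submodularD:
  "k_submodular n k f \<Longrightarrow> X \<in> kset n k \<Longrightarrow> Y \<in> kset n k
    \<Longrightarrow> f (kinf X Y) + f (ksup k X Y) \<le> f X + f Y"
  unfolding k_submodular_def by blast

lemma k_submodular_marginal_le_marginal_empty:
  assumes f: "k_submodular n k f" and Y: "Y \<in> kset n k"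
    and q: "q \<in> {1..k}" and i: "i \<in> {1..n}" and fresh: "\<forall>r. i \<notin> Y r"
  shows "rho f q i Y \<le> rho f q i empty_tuple"
proof -
  let ?X = "empty_tuple(q := {i})"
  have X: "?X \<in> kset n k"
    unfolding kset_def using q i by (simp add: empty_tuple_def)
  have inf: "kinf ?X Y = empty_tuple"
    using fresh by (auto simp: kinf_def empty_tuple_def fun_eq_iff)
  have sup: "ksup k ?X Y = Y(q := Y q \<union> {i})"
  proof
    fix r
    show "ksup k ?X Y r = (Y(q := Y q \<union> {i})) r"
    proof (cases "r \<in> {1..k}")
      case True
      have "x \<notin> ?X r' \<union> Y r'" if "x \<in> ?X r \<union> Y r" "r' \<noteq> r" for x r'
        using that fresh kset_disjoint[OF Y, of r r'] by (auto simp: empty_tuple_def split: if_split_asm)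
      then have "(?X r \<union> Y r) - (\<Union>r'\<in>{1..k} - {r}. ?X r' \<union> Y r') = ?X r \<union> Y r"
        by blast
      moreover have "?X r \<union> Y r = (Y(q := Y q \<union> {i})) r"
        by (cases "r = q") (simp_all add: empty_tuple_def)
      ultimately show ?thesis
        using True by (simp add: ksup_def)
    next
      case False
      then show ?thesis
        using q kset_outside_empty[OF Y False] by (auto simp: ksup_def)
    qed
  qed
  have "f (kinf ?X Y) + f (ksup k ?X Y) \<le> f ?X + f Y"
    using f X Y by (rule k_submodularD)
  moreover have "empty_tuple q = {}"
    by (simp add: empty_tuple_def)
  ultimately show ?thesis
    unfolding rho_def inf sup by (simp only: Un_empty_left)
qed

lemma k_submodular_remove_le_sum_marginals_empty:
  assumes f: "k_submodular n k f" and T: "T \<in> kset n k" and R: "finite R"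
    and R_sub: "R \<subseteq> {(q, i). q \<in> {1..k} \<and> i \<in> T q}"
  shows "f T - f (\<lambda>q. T q - {i. (q, i) \<in> R}) \<le> (\<Sum>(q, i)\<in>R. rho f q i empty_tuple)"
  using R R_sub
proof (induction R rule: finite_induct)
  case empty
  then show ?case by simp
next
  case (insert x R)
  obtain q i where x: "x = (q, i)" by fastforce
  define W where "W = (\<lambda>r. T r - {i. (r, i) \<in> R})"
  define Z where "Z = (\<lambda>r. T r - {i. (r, i) \<in> insert x R})"
  have q: "q \<in> {1..k}" and iT: "i \<in> T q"
    using insert.prems x by auto
  have i: "i \<in> {1..n}"
    using kset_subset_range[OF T q] iT by blast
  have Z: "Z \<in> kset n k"
    using T by (rule kset_subtuple) (simp add: Z_def)
  have fresh: "\<forall>r. i \<notin> Z r"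
  proof
    fix r
    show "i \<notin> Z r"
    proof (cases "r = q")
      case False
      then show ?thesis
        using kset_disjoint[OF T False] iT by (auto simp: Z_def)
    qed (simp add: Z_def x)
  qed
  have "W = Z(q := Z q \<union> {i})"
  proof
    fix r
    show "W r = (Z(q := Z q \<union> {i})) r"
      using insert.hyps(2) iT by (cases "r = q") (auto simp: W_def Z_def x)
  qed
  then have "f W - f Z = rho f q i Z"
    by (simp add: rho_def)
  also have "\<dots> \<le> rho f q i empty_tuple"
    using k_submodular_marginal_le_marginal_empty[OF f Z q i fresh] .
  finally have "f W - f Z \<le> rho f q i empty_tuple" .
  moreover have "f T - f W \<le> (\<Sum>(q, i)\<in>R. rho f q i empty_tuple)"
    using insert.IH insert.prems unfolding W_def by blast
  moreover have "(\<Sum>(q, i)\<in>insert x R. rho f q i empty_tuple)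
      = rho f q i empty_tuple + (\<Sum>(q, i)\<in>R. rho f q i empty_tuple)"
    using insert.hyps by (simp add: x)
  ultimately show ?case
    unfolding Z_def[symmetric] by linarith
qed

lemma Qval_ge_value_minus_interdicted_marginals:
  assumes f: "k_submodular n k f" and S: "S \<in> kset n k"
    and card_S: "\<forall>q\<in>{1..k}. card (S q) \<le> D q"
  shows "f S - (\<Sum>q\<in>{1..k}. \<Sum>i\<in>{1..n}. rho f q i empty_tuple * (if i \<in> S q then 1 else 0)
            * (if xi i then 1 else 0) * (if i \<in> X q then 1 else 0))
         \<le> Qval n k D xi f X"
proof -
  define R where "R = {1..k} \<times> {1..n} \<inter> {(q, i). i \<in> S q \<and> xi i \<and> i \<in> X q}"
  define S' where "S' = (\<lambda>q. S q - {i. (q, i) \<in> R})"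
  have "f S - f S' \<le> (\<Sum>(q, i)\<in>R. rho f q i empty_tuple)"
    unfolding S'_def by (rule k_submodular_remove_le_sum_marginals_empty[OF f S]) (auto simp: R_def)
  also have "\<dots> = (\<Sum>(q, i)\<in>{1..k} \<times> {1..n}. rho f q i empty_tuple * (if i \<in> S q then 1 else 0)
            * (if xi i then 1 else 0) * (if i \<in> X q then 1 else 0))"
    unfolding R_def by (subst sum.inter_restrict) (auto intro: sum.cong)
  also have "\<dots> = (\<Sum>q\<in>{1..k}. \<Sum>i\<in>{1..n}. rho f q i empty_tuple * (if i \<in> S q then 1 else 0)
            * (if xi i then 1 else 0) * (if i \<in> X q then 1 else 0))"
    by (rule sum.cartesian_product[symmetric])
  finally have remove: "f S - f S' \<le> \<dots>" .
  have S'_kset: "S' \<in> kset n k"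
    using S by (rule kset_subtuple) (auto simp: S'_def)
  have "card (S' q) \<le> D q" if q: "q \<in> {1..k}" for q
  proof -
    have "finite (S q)"
      using kset_subset_range[OF S q] finite_subset by blast
    then have "card (S' q) \<le> card (S q)"
      unfolding S'_def by (intro card_mono) auto
    with card_S q show ?thesis by fastforce
  qed
  with S'_kset have "S' \<in> Qfeas n k D xi X"
    unfolding Qfeas_def by (auto simp: S'_def R_def)
  then have "f S' \<le> Qval n k D xi f X"
    unfolding Qval_def by (intro Max_ge) (auto simp: finite_Qfeas)
  with remove show ?thesis by linarith
qed

lemma prob_dists_nonneg: "p \<in> prob_dists \<Longrightarrow> 0 \<le> p w"
  by (simp add: prob_dists_def)

lemma prob_dists_le_1: "p \<in> prob_dists \<Longrightarrow> p (w::'w::finite) \<le> 1"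
  unfolding prob_dists_def using member_le_sum[of w UNIV p] by auto

lemma bdd_above_expectations:
  assumes "PP \<subseteq> prob_dists"
  shows "bdd_above ((\<lambda>p. \<Sum>w\<in>UNIV. p (w::'w::finite) * c w) ` PP)"
proof (rule bdd_aboveI2)
  fix p
  assume "p \<in> PP"
  then have p: "p \<in> prob_dists"
    using assms by blast
  have "p w * c w \<le> \<bar>c w\<bar>" for w
  proof -
    have "p w * c w \<le> p w * \<bar>c w\<bar>"
      using prob_dists_nonneg[OF p] by (simp add: mult_left_mono)
    also have "\<dots> \<le> \<bar>c w\<bar>"
      using prob_dists_nonneg[OF p] prob_dists_le_1[OF p] by (simp add: mult_left_le_one_le)
    finally show ?thesis .
  qed
  then show "(\<Sum>w\<in>UNIV. p w * c w) \<le> (\<Sum>w\<in>UNIV. \<bar>c w\<bar>)"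
    by (rule sum_mono)
qed

lemma cutval_le_PhiR:
  assumes f: "\<forall>w. k_submodular n k (f w)" and PP: "PP \<noteq> {}" "PP \<subseteq> prob_dists"
    and Sh: "\<forall>w. Sh j w \<in> Qfeas n k D (xi w) Y"
    and ph: "\<forall>p\<in>PP. Phival f ph Sh j \<le> (\<Sum>w\<in>UNIV. p w * f w (Sh j w))"
  shows "cutval n k xi f PP ph Sh j X \<le> PhiR n k D xi f PP X"
  unfolding PhiR_def
proof (rule cINF_greatest[OF PP(1)])
  fix p
  assume p: "p \<in> PP"
  define g where "g w q i = rho (f w) q i empty_tuple * (if i \<in> Sh j w q then 1 else 0)
      * (if xi w i then 1 else 0)" for w q i
  define loss where "loss w = (\<Sum>q\<in>{1..k}. \<Sum>i\<in>{1..n}. g w q i * (if i \<in> X q then 1 else 0))" for w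
  have coef: "(\<Sum>w\<in>UNIV. p w * g w q i) \<le> cutcoef xi f PP Sh j q i" for q i
    unfolding cutcoef_def g_def using cSUP_upper[OF p bdd_above_expectations[OF PP(2)]]
    by (simp add: mult.assoc)
  have "f w (Sh j w) - loss w \<le> Qval n k D (xi w) (f w) X" for w
    using Sh unfolding loss_def g_def Qfeas_def
    by (intro Qval_ge_value_minus_interdicted_marginals) (use f in auto)
  then have "(\<Sum>w\<in>UNIV. p w * (f w (Sh j w) - loss w)) \<le> (\<Sum>w\<in>UNIV. p w * Qval n k D (xi w) (f w) X)"
    using PP(2) p by (intro sum_mono mult_left_mono prob_dists_nonneg) auto
  moreover have "(\<Sum>w\<in>UNIV. p w * loss w)
      \<le> (\<Sum>q\<in>{1..k}. \<Sum>i\<in>{1..n}. cutcoef xi f PP Sh j q i * (if i \<in> X q then 1 else 0))"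
  proof -
    have "(\<Sum>w\<in>UNIV. p w * loss w)
        = (\<Sum>q\<in>{1..k}. \<Sum>i\<in>{1..n}. (\<Sum>w\<in>UNIV. p w * g w q i) * (if i \<in> X q then 1 else 0))"
      unfolding loss_def
      by (simp add: sum_distrib_left sum_distrib_right sum.swap[of _ UNIV] mult.assoc)
    with coef show ?thesis
      by (auto intro!: sum_mono)
  qed
  moreover have "Phival f ph Sh j \<le> (\<Sum>w\<in>UNIV. p w * f w (Sh j w))"
    using ph p by blast
  ultimately show "cutval n k xi f PP ph Sh j X \<le> (\<Sum>w\<in>UNIV. p w * Qval n k D (xi w) (f w) X)"
    unfolding cutval_def by (simp add: right_diff_distrib sum_subtractf)
qed

lemma cutval_eq_Phival_at_iterate:
  assumes PP: "PP \<noteq> {}" and Sh: "\<forall>w. Sh j w \<in> Qfeas n k D (xi w) Y"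
  shows "cutval n k xi f PP ph Sh j Y = Phival f ph Sh j"
proof -
  have "cutcoef xi f PP Sh j q i = 0" if "q \<in> {1..k}" "i \<in> {1..n}" "i \<in> Y q" for q i
  proof -
    have "i \<in> Sh j w q \<Longrightarrow> \<not> xi w i" for w
      using Sh that unfolding Qfeas_def by blast
    then have "(\<Sum>w\<in>UNIV. p w * rho (f w) q i empty_tuple * (if i \<in> Sh j w q then 1 else 0)
        * (if xi w i then 1 else 0)) = 0" for p
      by (intro sum.neutral) auto
    then show ?thesis
      unfolding cutcoef_def by (simp add: cSUP_const[OF PP])
  qed
  then show ?thesis
    unfolding cutval_def by (simp add: sum.neutral)
qed

lemma PhiR_eq_Phival:
  assumes Sh: "\<forall>w. Sh j w \<in> Qfeas n k D (xi w) Y \<and> (\<forall>S\<in>Qfeas n k D (xi w) Y. f w S \<le> f w (Sh j w))"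
    and ph: "ph j \<in> PP" "\<forall>p\<in>PP. Phival f ph Sh j \<le> (\<Sum>w\<in>UNIV. p w * f w (Sh j w))"
  shows "PhiR n k D xi f PP Y = Phival f ph Sh j"
proof -
  have "Qval n k D (xi w) (f w) Y = f w (Sh j w)" for w
    unfolding Qval_def using Sh by (intro Max_eqI) (auto simp: finite_Qfeas)
  then show ?thesis
    unfolding PhiR_def using ph by (intro cInf_eq_minimum) (auto simp: Phival_def)
qed

lemma theta_ub_running_min:
  assumes "1 \<le> m"
  obtains j where "j \<in> {1..m}" "theta_ub f ph Sh m = ereal (Phival f ph Sh j)"
    "xstar f ph Sh xh m = xh j" "\<forall>i\<in>{1..m}. Phival f ph Sh j \<le> Phival f ph Sh i"
  using assms
proof (induction m arbitrary: thesis)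
  case 0
  then show ?case by simp
next
  case (Suc m)
  show ?case
  proof (cases "m = 0")
    case True
    then show ?thesis
      using Suc.prems(1)[of 1] by simp
  next
    case False
    then obtain j where j: "j \<in> {1..m}" "theta_ub f ph Sh m = ereal (Phival f ph Sh j)"
      "xstar f ph Sh xh m = xh j" "\<forall>i\<in>{1..m}. Phival f ph Sh j \<le> Phival f ph Sh i"
      using Suc.IH by auto
    have upto_Suc: "{1..Suc m} = insert (Suc m) {1..m}"
      by auto
    show ?thesis
    proof (cases "Phival f ph Sh (Suc m) < Phival f ph Sh j")
      case True
      then have "\<forall>i\<in>{1..Suc m}. Phival f ph Sh (Suc m) \<le> Phival f ph Sh i"
        using j(4) unfolding upto_Suc by force
      with True j(2) show ?thesis
        by (intro Suc.prems(1)[of "Suc m"]) simp_all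
    next
      case False
      then have "\<forall>i\<in>{1..Suc m}. Phival f ph Sh j \<le> Phival f ph Sh i"
        using j(4) unfolding upto_Suc by simp
      with False j show ?thesis
        by (intro Suc.prems(1)[of j]) simp_all
    qed
  qed
qed

locale exact_cutting_plane_run =
  fixes n k :: nat and A D :: "nat \<Rightarrow> nat"
    and xi :: "'w::finite \<Rightarrow> nat \<Rightarrow> bool"
    and f :: "'w \<Rightarrow> (nat \<Rightarrow> nat set) \<Rightarrow> real"
    and PP :: "('w \<Rightarrow> real) set" and eps :: real
    and xh :: "nat \<Rightarrow> nat \<Rightarrow> nat set" and Sh :: "nat \<Rightarrow> 'w \<Rightarrow> nat \<Rightarrow> nat set"
    and ph :: "nat \<Rightarrow> 'w \<Rightarrow> real" and eta :: "nat \<Rightarrow> real"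
  assumes eps_nonneg: "0 \<le> eps"
    and submodular: "\<forall>w. k_submodular n k (f w)"
    and PP_nonempty: "PP \<noteq> {}" and PP_prob_dists: "PP \<subseteq> prob_dists"
    and run: "valid_run n k A D xi f PP eps xh Sh ph eta"
begin

abbreviation gap_open :: "nat \<Rightarrow> bool" where
  "gap_open m \<equiv> theta_ub f ph Sh m - theta_lb eta m > ereal eps"

abbreviation performed :: "nat \<Rightarrow> bool" where
  "performed L \<equiv> iteration_ok n k A D xi f PP xh Sh ph eta L"

lemma gap_open_0: "gap_open 0"
  by simp

lemma performed_if_gap_open: "1 \<le> L \<Longrightarrow> \<forall>m<L. gap_open m \<Longrightarrow> performed L"
  using run unfolding valid_run_def by (cases L) auto

lemma iterate_in_Xset:
  assumes "\<forall>m'<m. gap_open m'" and "L \<in> {1..Suc m}"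
  shows "xh L \<in> Xset n k A"
proof (cases "L = 1")
  case True
  then show ?thesis
    using run unfolding valid_run_def by simp
next
  case False
  then obtain L' where L': "L = Suc L'" "L' \<in> {1..m}"
    using assms(2) by (cases L) auto
  with assms(1) have "performed L'"
    by (intro performed_if_gap_open) auto
  with L'(1) show ?thesis
    unfolding iteration_ok_def by blast
qed

lemma gap_closed_at_revisit:
  assumes L: "performed L" and i: "i \<in> {1..L}" "performed i" and revisit: "xh (Suc L) = xh i"
  shows "\<not> gap_open L"
proof -
  have "Phival f ph Sh i = cutval n k xi f PP ph Sh i (xh i)"
    using i(2) by (intro cutval_eq_Phival_at_iterate[symmetric] PP_nonempty) (auto simp: iteration_ok_def)
  also have "\<dots> \<le> eta L"
    using L i(1) revisit unfolding iteration_ok_def by auto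
  finally have cut: "Phival f ph Sh i \<le> eta L" .
  have "1 \<le> L"
    using i(1) by simp
  moreover obtain j where "theta_ub f ph Sh L = ereal (Phival f ph Sh j)"
      "\<forall>i\<in>{1..L}. Phival f ph Sh j \<le> Phival f ph Sh i"
    using theta_ub_running_min[OF \<open>1 \<le> L\<close>, of f ph Sh xh] by blast
  moreover have "theta_lb eta L = ereal (eta L)"
    using i(1) by (cases L) auto
  ultimately show ?thesis
    using cut i(1) eps_nonneg by fastforce
qed

lemma terminates: "\<exists>m. \<not> gap_open m"
proof (rule ccontr)
  assume "\<nexists>m. \<not> gap_open m"
  then have open_gap: "\<forall>m. gap_open m"
    by blast
  then have performed: "performed L" if "1 \<le> L" for L
    using that by (simp add: performed_if_gap_open)
  define N where "N = card (Xset n k A)"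
  have "xh ` {1..N + 1} \<subseteq> Xset n k A"
    using open_gap iterate_in_Xset[of N] by auto
  then have "\<not> inj_on xh {1..N + 1}"
    using card_inj_on_le[OF _ _ finite_Xset] unfolding N_def by fastforce
  then obtain i j where "i \<in> {1..N + 1}" "j \<in> {1..N + 1}" "i < j" "xh i = xh j"
    unfolding inj_on_def by (metis linorder_neqE_nat)
  then obtain L where "j = Suc L" "i \<in> {1..L}" "xh (Suc L) = xh i"
    by (cases j) auto
  then have "\<not> gap_open L"
    using gap_closed_at_revisit performed by simp
  with open_gap show False
    by blast
qed

lemma eta_le_PhiR:
  assumes "\<forall>j\<in>{1..L}. performed j" and "1 \<le> L" and "X \<in> Xset n k A"
  shows "eta L \<le> PhiR n k D xi f PP X"
proof -
  have "cutval n k xi f PP ph Sh j X \<le> PhiR n k D xi f PP X" if "j \<in> {1..L}" for j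
    using assms(1) that submodular PP_nonempty PP_prob_dists
    by (intro cutval_le_PhiR[of n k f PP Sh j D xi "xh j"]) (auto simp: iteration_ok_def Phival_def)
  with assms show ?thesis
    unfolding iteration_ok_def by auto
qed

lemma stopping_iteration:
  assumes stop: "\<not> gap_open m" and before: "\<forall>m'<m. gap_open m'"
  shows "xstar f ph Sh xh m \<in> Xset n k A"
    and "theta_ub f ph Sh m = ereal (PhiR n k D xi f PP (xstar f ph Sh xh m))"
    and "PhiR n k D xi f PP (xstar f ph Sh xh m) \<le> (MIN X\<in>Xset n k A. PhiR n k D xi f PP X) + eps"
proof -
  have m: "1 \<le> m"
    using stop gap_open_0 by (cases m) auto
  have performed: "performed L" if "L \<in> {1..m}" for L
    using that before by (intro performed_if_gap_open) auto
  obtain j where j: "j \<in> {1..m}" "theta_ub f ph Sh m = ereal (Phival f ph Sh j)"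
      "xstar f ph Sh xh m = xh j"
    using theta_ub_running_min[OF m, of f ph Sh xh] by blast
  show "xstar f ph Sh xh m \<in> Xset n k A"
    using iterate_in_Xset[OF before] j by simp
  have PhiR_j: "PhiR n k D xi f PP (xh j) = Phival f ph Sh j"
    using performed[OF j(1)] by (intro PhiR_eq_Phival) (auto simp: iteration_ok_def Phival_def)
  then show "theta_ub f ph Sh m = ereal (PhiR n k D xi f PP (xstar f ph Sh xh m))"
    using j by simp
  obtain X where X: "X \<in> Xset n k A" "(MIN X\<in>Xset n k A. PhiR n k D xi f PP X) = PhiR n k D xi f PP X"
    using Min_in[of "PhiR n k D xi f PP ` Xset n k A"] finite_Xset iterate_in_Xset[OF before, of 1]
    by fastforce
  have "theta_lb eta m = ereal (eta m)"
    using m by (cases m) auto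
  then have "Phival f ph Sh j \<le> eta m + eps"
    using stop j(2) by simp
  also have "eta m \<le> PhiR n k D xi f PP X"
    using performed m X(1) by (intro eta_le_PhiR) auto
  finally show "PhiR n k D xi f PP (xstar f ph Sh xh m) \<le> (MIN X\<in>Xset n k A. PhiR n k D xi f PP X) + eps"
    using PhiR_j j(3) X(2) by simp
qed

end

theorem theorem7:
  fixes n k :: nat and A D :: "nat \<Rightarrow> nat"
    and xi :: "'w::finite \<Rightarrow> nat \<Rightarrow> bool"
    and f :: "'w \<Rightarrow> (nat \<Rightarrow> nat set) \<Rightarrow> real"
    and PP :: "('w \<Rightarrow> real) set" and eps :: real
    and xh :: "nat \<Rightarrow> nat \<Rightarrow> nat set" and Sh :: "nat \<Rightarrow> 'w \<Rightarrow> nat \<Rightarrow> nat set"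
    and ph :: "nat \<Rightarrow> 'w \<Rightarrow> real" and eta :: "nat \<Rightarrow> real"
  assumes "0 < n" and "0 < k" and "0 \<le> eps"
    and "\<forall>w. k_submodular n k (f w)" and "\<forall>w. k_monotone n k (f w)"
    and "PP \<noteq> {}" and "compact PP" and "PP \<subseteq> prob_dists"
    and "valid_run n k A D xi f PP eps xh Sh ph eta"
  shows "\<exists>m. \<not> (theta_ub f ph Sh m - theta_lb eta m > ereal eps) \<and>
             (\<forall>m'<m. theta_ub f ph Sh m' - theta_lb eta m' > ereal eps) \<and>
             xstar f ph Sh xh m \<in> Xset n k A \<and>
             theta_ub f ph Sh m = ereal (PhiR n k D xi f PP (xstar f ph Sh xh m)) \<and>
             PhiR n k D xi f PP (xstar f ph Sh xh m)
               \<le> (MIN X\<in>Xset n k A. PhiR n k D xi f PP X) + eps"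
proof -
  interpret exact_cutting_plane_run n k A D xi f PP eps xh Sh ph eta
    using assms by unfold_locales auto
  obtain m where "\<not> gap_open m" and "\<forall>m'<m. gap_open m'"
    using terminates exists_least_iff[of "\<lambda>m. \<not> gap_open m"] by blast
  with stopping_iteration show ?thesis
    by blast
qed

end
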